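(* In the transfer model and with the freeze algorithm $\mathrm{CalcFreeze}$ described in the context (applied after the cycle-elimination preprocessing, if $G$ has cycles), suppose no burn transactions occur between the disputed transaction $t_0$ and the freeze time, and let $s=\mathrm{val}(t_0)$ be the amount sent by $t_0=(v\to a_0)$. Then when the algorithm terminates, the total amount frozen is exactly $s$: $$ s=\sum_{a}\mathrm{toFreeze}(a), $$ where the sum ranges over all vertices $a$ of the (preprocessed) graph.
   Context: Transfer model. There is a finite set of addresses, each holding a nonnegative token balance. A transaction is a transfer $t=(a\to b)$ of value $\mathrm{val}(t)\ge 0$ from address $a$ to address $b$; it decreases the balance of $a$ by $\mathrm{val}(t)$ and increases the balance of $b$ by $\mathrm{val}(t)$. Transactions are totally ordered in time, and each transaction is valid: the sender's balance never becomes negative. There are no burns, i.e. no operation removes tokens from an address other than a transfer. The disputed transaction is $t_0=(v\to a_0)$ with $s=\mathrm{val}(t_0)$. The freeze happens at a time after $t_0$ and after all transactions considered. For an address $a$, $\mathrm{Bal}(a)$ denotes its balance at the freeze time; no amounts are frozen before this freeze. Transaction graph $G$. Consider the transactions strictly after $t_0$ and before the freeze. $G$ is the directed multigraph whose edges are those transactions $(b\to c)$ for which there is a directed path of such transactions from $a_0$ to $b$ ($b=a_0$ allowed). The vertices are $a_0$ and all endpoints of these edges. Each edge keeps its time and its value $\mathrm{val}$. Cycle elimination (preprocessing). While $G$ contains a directed cycle $c_0,\dots,c_{k-1}$ of edges, let $c$ be an edge of minimal value on it (ties broken arbitrarily) and $d=\mathrm{val}(c)$. Remove $c$ from $G$ and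 subtract $d$ from the value of every other edge of the cycle. Edge times are unchanged. Repeat until $G$ is acyclic. Algorithm $\mathrm{CalcFreeze}$ (on acyclic $G$): - Let $L$ be a topological order of the vertices of $G$, i.e. for every edge $a\to b$, $a$ precedes $b$. - Initialize $\mathrm{oblig}(a)=0$ for all $a\neq a_0$ and $\mathrm{oblig}(a_0)=s$. - For each $a$ in the order $L$: - Set $\tau=\mathrm{oblig}(a)$, $\mathrm{toFreeze}(a)=\min(\tau,\mathrm{Bal}(a))$ and $\tau'=\tau-\mathrm{toFreeze}(a)$. - If $\tau'\le 0$, proceed to the next vertex. - Otherwise, iterate over the outgoing edges $t=(a\to b)$ of $a$ in $G$ in reverse chronological order (most recent first). For each such edge set $\mathrm{ob}(b,t)=\min(\tau',\mathrm{val}(t))$, add $\mathrm{ob}(b,t)$ to $\mathrm{oblig}(b)$, and subtract $\mathrm{ob}(b,t)$ from $\tau'$. Stop iterating over the edges of $a$ as soon as $\tau'\le 0$. - Edges never processed have $\mathrm{ob}(b,t)=0$. *)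

theory Defs
  imports Complex_Main
begin

text \<open>Transactions are given as a chronologically ordered list of triples
  (sender, receiver, value).  The time of the transaction at list position j is j.\<close>

type_synonym ('a) tx = "'a \<times> 'a \<times> real"

definition tsrc :: "'a tx list \<Rightarrow> nat \<Rightarrow> 'a" where
  "tsrc txs j = fst (txs ! j)"

definition tdst :: "'a tx list \<Rightarrow> nat \<Rightarrow> 'a" where
  "tdst txs j = fst (snd (txs ! j))"

definition tval :: "'a tx list \<Rightarrow> nat \<Rightarrow> real" where
  "tval txs j = snd (snd (txs ! j))"

text \<open>Balance of address a after the first n transactions, starting from initial balances init.
  Only transfers change balances (no burns).\<close>
definition bal :: "('a \<Rightarrow> real) \<Rightarrow> 'a tx list \<Rightarrow> nat \<Rightarrow> 'a \<Rightarrow> real" where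
  "bal init txs n a = init a
     + (\<Sum>j<n. (if tdst txs j = a then tval txs j else 0) - (if tsrc txs j = a then tval txs j else 0))"

definition valid_history :: "('a \<Rightarrow> real) \<Rightarrow> 'a tx list \<Rightarrow> bool" where
  "valid_history init txs \<longleftrightarrow> (\<forall>a. 0 \<le> init a) \<and>
     (\<forall>j < length txs. 0 \<le> tval txs j \<and> tval txs j \<le> bal init txs j (tsrc txs j))"

definition after_rel :: "'a tx list \<Rightarrow> nat \<Rightarrow> ('a \<times> 'a) set" where
  "after_rel txs i0 = {(tsrc txs j, tdst txs j) | j. i0 < j \<and> j < length txs}"

text \<open>Edges of the transaction graph G (identified by their time index).\<close>
definition G_edges :: "'a tx list \<Rightarrow> nat \<Rightarrow> nat set" where
  "G_edges txs i0 = {j. i0 < j \<and> j < length txs \<and>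
      (tdst txs i0, tsrc txs j) \<in> (after_rel txs i0)\<^sup>*}"

definition G_vertices :: "'a tx list \<Rightarrow> nat \<Rightarrow> 'a set" where
  "G_vertices txs i0 = insert (tdst txs i0)
      (tsrc txs ` G_edges txs i0 \<union> tdst txs ` G_edges txs i0)"

definition is_cycle :: "(nat \<Rightarrow> 'a) \<Rightarrow> (nat \<Rightarrow> 'a) \<Rightarrow> nat set \<Rightarrow> nat list \<Rightarrow> bool" where
  "is_cycle src dst E cs \<longleftrightarrow> cs \<noteq> [] \<and> distinct cs \<and> set cs \<subseteq> E \<and>
     (\<forall>k < length cs. dst (cs ! k) = src (cs ! ((k + 1) mod length cs)))"

definition elim_step :: "(nat \<Rightarrow> 'a) \<Rightarrow> (nat \<Rightarrow> 'a) \<Rightarrow>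
    nat set \<times> (nat \<Rightarrow> real) \<Rightarrow> nat set \<times> (nat \<Rightarrow> real) \<Rightarrow> bool" where
  "elim_step src dst G G' \<longleftrightarrow> (\<exists>cs c. is_cycle src dst (fst G) cs \<and> c \<in> set cs \<and>
      (\<forall>e \<in> set cs. snd G c \<le> snd G e) \<and>
      G' = (fst G - {c}, (\<lambda>e. if e \<in> set cs \<and> e \<noteq> c then snd G e - snd G c else snd G e)))"

definition acyclic_edges :: "(nat \<Rightarrow> 'a) \<Rightarrow> (nat \<Rightarrow> 'a) \<Rightarrow> nat set \<Rightarrow> bool" where
  "acyclic_edges src dst E \<longleftrightarrow> \<not> (\<exists>cs. is_cycle src dst E cs)"

definition topo_order :: "(nat \<Rightarrow> 'a) \<Rightarrow> (nat \<Rightarrow> 'a) \<Rightarrow> 'a set \<Rightarrow> nat set \<Rightarrow> 'a list \<Rightarrow> bool" where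
  "topo_order src dst V E L \<longleftrightarrow> distinct L \<and> set L = V \<and>
     (\<forall>e \<in> E. \<exists>i j. i < j \<and> j < length L \<and> L ! i = src e \<and> L ! j = dst e)"

fun distribute :: "(nat \<Rightarrow> 'a) \<Rightarrow> (nat \<Rightarrow> real) \<Rightarrow> real \<Rightarrow> nat list \<Rightarrow> ('a \<Rightarrow> real) \<Rightarrow> ('a \<Rightarrow> real)" where
  "distribute dst w tau [] ob = ob"
| "distribute dst w tau (e # es) ob =
     (if tau \<le> 0 then ob
      else (let x = min tau (w e) in distribute dst w (tau - x) es (ob(dst e := ob (dst e) + x))))"

definition out_edges_rev :: "(nat \<Rightarrow> 'a) \<Rightarrow> nat set \<Rightarrow> 'a \<Rightarrow> nat list" where
  "out_edges_rev src E a = rev (sorted_list_of_set {e \<in> E. src e = a})"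

text \<open>Main loop of CalcFreeze; state = (oblig, toFreeze).\<close>
fun process :: "(nat \<Rightarrow> 'a) \<Rightarrow> (nat \<Rightarrow> 'a) \<Rightarrow> (nat \<Rightarrow> real) \<Rightarrow> nat set \<Rightarrow> ('a \<Rightarrow> real) \<Rightarrow>
    'a list \<Rightarrow> ('a \<Rightarrow> real) \<Rightarrow> ('a \<Rightarrow> real) \<Rightarrow> ('a \<Rightarrow> real) \<times> ('a \<Rightarrow> real)" where
  "process src dst w E B [] ob tf = (ob, tf)"
| "process src dst w E B (a # L) ob tf =
     (let tau = ob a; f = min tau (B a); tau' = tau - f; tf' = tf(a := f) in
      if tau' \<le> 0 then process src dst w E B L ob tf'
      else process src dst w E B L (distribute dst w tau' (out_edges_rev src E a) ob) tf')"

definition calc_freeze :: "(nat \<Rightarrow> 'a) \<Rightarrow> (nat \<Rightarrow> 'a) \<Rightarrow> (nat \<Rightarrow> real) \<Rightarrow> nat set \<Rightarrow> ('a \<Rightarrow> real) \<Rightarrow>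
    'a list \<Rightarrow> 'a \<Rightarrow> real \<Rightarrow> 'a \<Rightarrow> real" where
  "calc_freeze src dst w E B L a0 s =
     snd (process src dst w E B L (\<lambda>a. if a = a0 then s else 0) (\<lambda>_. 0))"

end

theory Submission
  imports Defs
begin

text \<open>Eliminating a cycle lowers every edge of the cycle by the same amount, so it preserves
  the net inflow (inflow minus outflow) of every vertex. All later outgoing transfers of an
  address reachable from a0 are edges of G, whereas only some of its incoming ones are; together
  with t0 itself this bounds s[a = a0] plus the net inflow of a by Bal(a). Along a topological
  order the obligation of a vertex is at most s[a = a0] plus what its processed predecessors
  sent it, so the part it cannot freeze is covered by its outflow and is passed on in full.
  Obligation is therefore conserved, and all of s ends up frozen.\<close>

definition net_inflow :: "(nat \<Rightarrow> 'a) \<Rightarrow> (nat \<Rightarrow> 'a) \<Rightarrow> nat set \<Rightarrow> (nat \<Rightarrow> real) \<Rightarrow> 'a \<Rightarrow> real"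
  where "net_inflow src dst E w a = sum w {e \<in> E. dst e = a} - sum w {e \<in> E. src e = a}"

lemma is_cycle_card_in_eq_card_out:
  assumes "is_cycle src dst E cs"
  shows "card {e \<in> set cs. dst e = a} = card {e \<in> set cs. src e = a}"
proof -
  have dist: "distinct cs" using assms unfolding is_cycle_def by simp
  have "map dst cs = map src (rotate1 cs)"
    using assms by (intro nth_equalityI) (auto simp: is_cycle_def nth_rotate1)
  then have "length (filter (\<lambda>v. v = a) (map dst cs)) = length (filter (\<lambda>v. v = a) (map src (rotate1 cs)))"
    by simp
  then have "length (filter (\<lambda>e. dst e = a) cs) = length (filter (\<lambda>e. src e = a) (rotate1 cs))"
    by (simp add: comp_def)
  with dist show ?thesis
    by (simp add: distinct_length_filter Collect_conj_eq Int_commute)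
qed

lemma elim_stepE:
  assumes "elim_step src dst (E, w) (E', w')"
  obtains cs c where "is_cycle src dst E cs" "c \<in> set cs" "\<forall>e \<in> set cs. w c \<le> w e"
    "E' = E - {c}" "w' = (\<lambda>e. if e \<in> set cs \<and> e \<noteq> c then w e - w c else w e)"
  using assms unfolding elim_step_def by (simp only: fst_conv snd_conv prod.inject) blast

lemma elim_step_net_inflow:
  assumes step: "elim_step src dst (E, w) (E', w')" and fin: "finite E"
  shows "net_inflow src dst E' w' a = net_inflow src dst E w a"
proof -
  obtain cs c where cyc: "is_cycle src dst E cs" and c: "c \<in> set cs"
    and E': "E' = E - {c}" and w': "w' = (\<lambda>e. if e \<in> set cs \<and> e \<noteq> c then w e - w c else w e)"
    using step by (rule elim_stepE)
  have csE: "set cs \<subseteq> E" using cyc unfolding is_cycle_def by simp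
  have reduced: "sum w' {e \<in> E'. P e} = sum w {e \<in> E. P e} - w c * card {e \<in> set cs. P e}" for P
  proof -
    \<comment> \<open>the removed edge c carries weight w c - w c = 0 after the subtraction\<close>
    have "sum w' {e \<in> E'. P e} = (\<Sum>e \<in> {e \<in> E. P e}. w e - (if e \<in> set cs then w c else 0))"
      by (rule sum.mono_neutral_cong_left) (use fin in \<open>auto simp: E' w' c\<close>)
    also have "\<dots> = sum w {e \<in> E. P e} - sum (\<lambda>e. w c) {e \<in> {e \<in> E. P e}. e \<in> set cs}"
      using fin by (simp add: sum_subtractf sum.inter_filter[symmetric])
    also have "{e \<in> {e \<in> E. P e}. e \<in> set cs} = {e \<in> set cs. P e}" using csE by auto
    finally show ?thesis by (simp add: mult.commute)
  qed
  show ?thesis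
    unfolding net_inflow_def reduced is_cycle_card_in_eq_card_out[OF cyc] by simp
qed

lemma elim_steps_invariants:
  assumes "(elim_step src dst)\<^sup>*\<^sup>* (E\<^sub>0, w\<^sub>0) (E, w)" and "finite E\<^sub>0" and "\<forall>e \<in> E\<^sub>0. 0 \<le> w\<^sub>0 e"
  shows "E \<subseteq> E\<^sub>0 \<and> (\<forall>e \<in> E. 0 \<le> w e) \<and> net_inflow src dst E w = net_inflow src dst E\<^sub>0 w\<^sub>0"
  using assms(1)
proof (induction rule: rtranclp_induct2)
  case refl
  then show ?case using assms(3) by simp
next
  case (step E w E' w')
  obtain cs c where "c \<in> set cs" "\<forall>e \<in> set cs. w c \<le> w e" "E' = E - {c}"
    "w' = (\<lambda>e. if e \<in> set cs \<and> e \<noteq> c then w e - w c else w e)"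
    using step.hyps(2) by (rule elim_stepE)
  moreover have "finite E" using step.IH assms(2) by (blast intro: finite_subset)
  then have "net_inflow src dst E' w' = net_inflow src dst E w"
    using step.hyps(2) by (intro ext elim_step_net_inflow)
  ultimately show ?case using step.IH by auto
qed

lemma sum_distribute:
  assumes "\<forall>e \<in> set es. 0 \<le> w e" and "0 \<le> tau" and "tau \<le> sum_list (map w es)"
    and "finite T" and "dst ` set es \<subseteq> T"
  shows "sum (distribute dst w tau es ob) T = sum ob T + tau"
  using assms
proof (induction es arbitrary: tau ob)
  case Nil
  then show ?case by simp
next
  case (Cons e es)
  show ?case
  proof (cases "tau \<le> 0")
    case True
    then show ?thesis using Cons.prems by simp
  next
    case False
    define x where "x = min tau (w e)"
    have "ob(dst e := ob (dst e) + x) = (\<lambda>a. ob a + (if a = dst e then x else 0))"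
      by auto
    then have "sum (ob(dst e := ob (dst e) + x)) T = sum ob T + x"
      using Cons.prems(4,5) by (simp add: sum.distrib)
    moreover have "sum (distribute dst w (tau - x) es (ob(dst e := ob (dst e) + x))) T
        = sum (ob(dst e := ob (dst e) + x)) T + (tau - x)"
      using Cons.prems sum_list_nonneg[of "map w es"]
      by (intro Cons.IH) (auto simp: x_def min_def)
    ultimately show ?thesis using False by (simp add: x_def Let_def)
  qed
qed

lemma distribute_le:
  assumes "\<forall>e \<in> set es. 0 \<le> w e"
  shows "distribute dst w tau es ob b \<le> ob b + sum_list (map (\<lambda>e. if dst e = b then w e else 0) es)"
  using assms
proof (induction es arbitrary: tau ob)
  case Nil
  then show ?case by simp
next
  case (Cons e es)
  have rest_nonneg: "0 \<le> sum_list (map (\<lambda>e. if dst e = b then w e else 0) es)"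
    using Cons.prems by (intro sum_list_nonneg) auto
  show ?case
  proof (cases "tau \<le> 0")
    case True
    then show ?thesis using Cons.prems rest_nonneg by simp
  next
    case False
    define x where "x = min tau (w e)"
    have "distribute dst w (tau - x) es (ob(dst e := ob (dst e) + x)) b
        \<le> (ob(dst e := ob (dst e) + x)) b + sum_list (map (\<lambda>e. if dst e = b then w e else 0) es)"
      using Cons.prems by (intro Cons.IH) simp
    moreover have "x \<le> w e" unfolding x_def by simp
    ultimately show ?thesis
      using False by (cases "dst e = b") (auto simp: x_def Let_def)
  qed
qed

definition push_excess :: "(nat \<Rightarrow> 'a) \<Rightarrow> (nat \<Rightarrow> 'a) \<Rightarrow> (nat \<Rightarrow> real) \<Rightarrow> nat set \<Rightarrow>
    ('a \<Rightarrow> real) \<Rightarrow> 'a \<Rightarrow> ('a \<Rightarrow> real) \<Rightarrow> 'a \<Rightarrow> real"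
  where "push_excess src dst w E B a ob =
    (let tau' = ob a - min (ob a) (B a) in
     if tau' \<le> 0 then ob else distribute dst w tau' (out_edges_rev src E a) ob)"

lemma process_Cons_push_excess:
  "process src dst w E B (a # L) ob tf =
     process src dst w E B L (push_excess src dst w E B a ob) (tf(a := min (ob a) (B a)))"
  by (simp add: push_excess_def Let_def)

lemma set_out_edges_rev:
  assumes "finite E"
  shows "set (out_edges_rev src E a) = {e \<in> E. src e = a}"
  using assms by (simp add: out_edges_rev_def)

lemma sum_list_out_edges_rev:
  assumes "finite E"
  shows "sum_list (map f (out_edges_rev src E a)) = sum f {e \<in> E. src e = a}"
  using assms by (simp add: out_edges_rev_def sum_list_distinct_conv_sum_set)

lemma sum_push_excess:
  assumes "finite E" and "\<forall>e \<in> E. 0 \<le> w e" and "ob a - B a \<le> sum w {e \<in> E. src e = a}"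
    and "finite T" and "dst ` {e \<in> E. src e = a} \<subseteq> T"
  shows "sum (push_excess src dst w E B a ob) T = sum ob T + (ob a - min (ob a) (B a))"
proof (cases "ob a \<le> B a")
  case True
  then show ?thesis by (simp add: push_excess_def)
next
  case False
  have "sum (distribute dst w (ob a - B a) (out_edges_rev src E a) ob) T = sum ob T + (ob a - B a)"
    using assms False
    by (intro sum_distribute) (auto simp: sum_list_out_edges_rev set_out_edges_rev)
  then show ?thesis using False by (simp add: push_excess_def)
qed

lemma push_excess_le:
  assumes "finite E" and "\<forall>e \<in> E. 0 \<le> w e"
  shows "push_excess src dst w E B a ob b \<le> ob b + sum w {e \<in> E. src e = a \<and> dst e = b}"
proof -
  have "distribute dst w tau (out_edges_rev src E a) ob b
      \<le> ob b + sum (\<lambda>e. if dst e = b then w e else 0) {e \<in> E. src e = a}" for tau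
    using distribute_le[of "out_edges_rev src E a" w dst tau ob b] assms
    by (simp add: sum_list_out_edges_rev set_out_edges_rev)
  moreover have "sum (\<lambda>e. if dst e = b then w e else 0) {e \<in> E. src e = a}
      = sum w {e \<in> {e \<in> E. src e = a}. dst e = b}"
    using assms(1) by (intro sum.inter_filter[symmetric]) simp
  moreover have "{e \<in> {e \<in> E. src e = a}. dst e = b} = {e \<in> E. src e = a \<and> dst e = b}"
    by auto
  moreover have "0 \<le> sum w {e \<in> E. src e = a \<and> dst e = b}"
    using assms(2) by (intro sum_nonneg) simp
  ultimately show ?thesis by (simp add: push_excess_def Let_def)
qed

definition edges_forward :: "(nat \<Rightarrow> 'a) \<Rightarrow> (nat \<Rightarrow> 'a) \<Rightarrow> nat set \<Rightarrow> 'a list \<Rightarrow> bool"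
  where "edges_forward src dst E L \<longleftrightarrow>
    (\<forall>e \<in> E. \<forall>k < length L. L ! k = src e \<longrightarrow> dst e \<in> set (drop (Suc k) L))"

lemma edges_forward_Cons:
  "edges_forward src dst E (a # L) \<longleftrightarrow>
     edges_forward src dst E L \<and> (\<forall>e \<in> E. src e = a \<longrightarrow> dst e \<in> set L)"
  unfolding edges_forward_def by (simp add: All_less_Suc2) blast

lemma topo_order_edges_forward:
  assumes "topo_order src dst V E L"
  shows "edges_forward src dst E L"
  unfolding edges_forward_def
proof (intro ballI allI impI)
  fix e k assume e: "e \<in> E" and k: "k < length L" and "L ! k = src e"
  obtain i j where ij: "i < j" "j < length L" "L ! i = src e" "L ! j = dst e"
    using assms e unfolding topo_order_def by blast
  have "k = i"
    using assms k ij \<open>L ! k = src e\<close> nth_eq_iff_index_eq[of L k i] unfolding topo_order_def by simp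
  then have "drop (Suc k) L ! (j - Suc k) = dst e" and "j - Suc k < length (drop (Suc k) L)"
    using ij by simp_all
  then show "dst e \<in> set (drop (Suc k) L)" by (metis nth_mem)
qed

text \<open>Invariant of the main loop on the remaining vertex list R: c is the obligation injected
  from outside the graph, and edges with source outside R come from already processed vertices.\<close>

lemma sum_process:
  assumes "distinct R" and fin: "finite E" and nonneg: "\<forall>e \<in> E. 0 \<le> w e"
    and "edges_forward src dst E R"
    and "\<forall>a \<in> set R. c a + net_inflow src dst E w a \<le> B a"
    and "\<forall>a \<in> set R. ob a \<le> c a + sum w {e \<in> E. dst e = a \<and> src e \<notin> set R}"
    and "\<forall>a \<in> set R. tf a = 0" and "finite S" and "set R \<subseteq> S"
  shows "sum (snd (process src dst w E B R ob tf)) S = sum tf S + sum ob (set R)"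
  using assms(1,4-)
proof (induction R arbitrary: ob tf)
  case Nil
  then show ?case by simp
next
  case (Cons x R)
  define f where "f = min (ob x) (B x)"
  define ob' where "ob' = push_excess src dst w E B x ob"
  have x: "x \<notin> set R" "x \<in> S" "tf x = 0" using Cons.prems by auto
  have forward: "edges_forward src dst E R" and out_to_R: "dst ` {e \<in> E. src e = x} \<subseteq> set R"
    using Cons.prems(2) by (auto simp: edges_forward_Cons)
  have "ob x \<le> c x + sum w {e \<in> E. dst e = x}"
    using Cons.prems(4) fin nonneg sum_mono2[of "{e \<in> E. dst e = x}" "{e \<in> E. dst e = x \<and> src e \<notin> set (x # R)}" w]
    by force
  then have excess: "ob x - B x \<le> sum w {e \<in> E. src e = x}"
    using Cons.prems(3) unfolding net_inflow_def by force
  have push_sum: "sum ob' (set R) = sum ob (set R) + (ob x - f)"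
    unfolding ob'_def f_def using fin nonneg excess out_to_R by (intro sum_push_excess) auto
  have freeze_sum: "sum (tf(x := f)) S = sum tf S + f"
    using x Cons.prems(6) by (simp add: sum.remove)
  have push_bound: "\<forall>a \<in> set R. ob' a \<le> c a + sum w {e \<in> E. dst e = a \<and> src e \<notin> set R}"
  proof
    fix a assume a: "a \<in> set R"
    have "{e \<in> E. dst e = a \<and> src e \<notin> set R} =
        {e \<in> E. dst e = a \<and> src e \<notin> set (x # R)} \<union> {e \<in> E. src e = x \<and> dst e = a}"
      using x by auto
    then have "sum w {e \<in> E. dst e = a \<and> src e \<notin> set R} =
        sum w {e \<in> E. dst e = a \<and> src e \<notin> set (x # R)} + sum w {e \<in> E. src e = x \<and> dst e = a}"
      using fin by (simp only:) (rule sum.union_disjoint; auto)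
    then show "ob' a \<le> c a + sum w {e \<in> E. dst e = a \<and> src e \<notin> set R}"
      using push_excess_le[OF fin nonneg, of src dst B x ob a] Cons.prems(4) a unfolding ob'_def by force
  qed
  have "sum (snd (process src dst w E B R ob' (tf(x := f)))) S = sum (tf(x := f)) S + sum ob' (set R)"
    by (rule Cons.IH) (use Cons.prems forward push_bound x in auto)
  then show ?case
    unfolding process_Cons_push_excess ob'_def[symmetric] f_def[symmetric]
    using push_sum freeze_sum x by simp
qed

lemma bal_Suc:
  "bal init txs (Suc n) a = bal init txs n a +
     ((if tdst txs n = a then tval txs n else 0) - (if tsrc txs n = a then tval txs n else 0))"
  unfolding bal_def by simp

lemma bal_nonneg:
  assumes "valid_history init txs" and "n \<le> length txs"
  shows "0 \<le> bal init txs n a"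
  using assms(2)
proof (induction n arbitrary: a)
  case 0
  then show ?case using assms(1) unfolding valid_history_def bal_def by simp
next
  case (Suc n)
  then have "0 \<le> tval txs n" "tval txs n \<le> bal init txs n (tsrc txs n)" "0 \<le> bal init txs n a"
    using assms(1) unfolding valid_history_def by auto
  then show ?case unfolding bal_Suc by auto
qed

lemma bal_length_split:
  assumes "i0 < length txs"
  shows "bal init txs (length txs) a = bal init txs (Suc i0) a +
     (\<Sum>j \<in> {j. i0 < j \<and> j < length txs}.
        (if tdst txs j = a then tval txs j else 0) - (if tsrc txs j = a then tval txs j else 0))"
proof -
  have split: "{..<length txs} = {..<Suc i0} \<union> {j. i0 < j \<and> j < length txs}" using assms by auto
  have "sum D {..<length txs} = sum D {..<Suc i0} + sum D {j. i0 < j \<and> j < length txs}"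
    for D :: "nat \<Rightarrow> real" by (subst split) (rule sum.union_disjoint, auto)
  then show ?thesis unfolding bal_def by simp
qed

lemma G_vertices_reachable:
  assumes "a \<in> G_vertices txs i0"
  shows "(tdst txs i0, a) \<in> (after_rel txs i0)\<^sup>*"
proof -
  have "(tdst txs i0, a) \<in> (after_rel txs i0)\<^sup>*"
    if j: "j \<in> G_edges txs i0" and "a = tsrc txs j \<or> a = tdst txs j" for j
  proof -
    have "(tdst txs i0, tsrc txs j) \<in> (after_rel txs i0)\<^sup>*"
      and "(tsrc txs j, tdst txs j) \<in> after_rel txs i0"
      using j unfolding G_edges_def after_rel_def by auto
    then show ?thesis using that(2) by auto
  qed
  then show ?thesis using assms unfolding G_vertices_def by auto
qed

lemma G_edges_out_of_vertex:
  assumes "a \<in> G_vertices txs i0"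
  shows "{j. i0 < j \<and> j < length txs \<and> tsrc txs j = a} = {e \<in> G_edges txs i0. tsrc txs e = a}"
  using G_vertices_reachable[OF assms] unfolding G_edges_def by auto

lemma G_net_inflow_le_bal:
  assumes valid: "valid_history init txs" and t0: "i0 < length txs"
    and a: "a \<in> G_vertices txs i0"
  shows "(if a = tdst txs i0 then tval txs i0 else 0)
     + net_inflow (tsrc txs) (tdst txs) (G_edges txs i0) (tval txs) a \<le> bal init txs (length txs) a"
proof -
  let ?A = "{j. i0 < j \<and> j < length txs}"
  let ?G = "G_edges txs i0"
  have finA: "finite ?A" by (rule finite_subset[of _ "{..<length txs}"]) auto
  have nonneg: "\<forall>j \<in> ?A. 0 \<le> tval txs j" using valid unfolding valid_history_def by auto
  have "sum (tval txs) {e \<in> ?G. tdst txs e = a} \<le> sum (tval txs) {j \<in> ?A. tdst txs j = a}"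
    using finA nonneg by (intro sum_mono2) (auto simp: G_edges_def)
  moreover have "sum (tval txs) {e \<in> ?G. tsrc txs e = a} = sum (tval txs) {j \<in> ?A. tsrc txs j = a}"
    using G_edges_out_of_vertex[OF a] by simp
  moreover have "(if a = tdst txs i0 then tval txs i0 else 0) \<le> bal init txs (Suc i0) a"
    using bal_nonneg[OF valid, of i0 a] bal_nonneg[OF valid, of "Suc i0" a] valid t0
    unfolding bal_Suc valid_history_def by auto
  moreover have "bal init txs (length txs) a = bal init txs (Suc i0) a +
      (sum (tval txs) {j \<in> ?A. tdst txs j = a} - sum (tval txs) {j \<in> ?A. tsrc txs j = a})"
    unfolding sum.inter_filter[OF finA] sum_subtractf[symmetric] by (rule bal_length_split[OF t0])
  ultimately show ?thesis unfolding net_inflow_def by linarith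
qed

theorem theoremA1:
  fixes init :: "'a \<Rightarrow> real" and txs :: "'a tx list" and i0 :: nat
    and E :: "nat set" and w :: "nat \<Rightarrow> real" and L :: "'a list"
  assumes valid: "valid_history init txs"
    and t0: "i0 < length txs"
    and pre: "(elim_step (tsrc txs) (tdst txs))\<^sup>*\<^sup>* (G_edges txs i0, tval txs) (E, w)"
    and acyc: "acyclic_edges (tsrc txs) (tdst txs) E"
    and topo: "topo_order (tsrc txs) (tdst txs) (G_vertices txs i0) E L"
  shows "tval txs i0 =
     (\<Sum>a \<in> G_vertices txs i0.
        calc_freeze (tsrc txs) (tdst txs) w E (bal init txs (length txs)) L
          (tdst txs i0) (tval txs i0) a)"
proof -
  define c where "c a = (if a = tdst txs i0 then tval txs i0 else 0)" for a
  have finG: "finite (G_edges txs i0)"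
    by (rule finite_subset[of _ "{..<length txs}"]) (auto simp: G_edges_def)
  moreover have "\<forall>e \<in> G_edges txs i0. 0 \<le> tval txs e"
    using valid unfolding valid_history_def G_edges_def by auto
  ultimately have E: "E \<subseteq> G_edges txs i0" "\<forall>e \<in> E. 0 \<le> w e"
    and net: "net_inflow (tsrc txs) (tdst txs) E w = net_inflow (tsrc txs) (tdst txs) (G_edges txs i0) (tval txs)"
    using elim_steps_invariants[OF pre] by auto
  have finE: "finite E" using finite_subset[OF E(1) finG] .
  have L: "distinct L" "set L = G_vertices txs i0"
    using topo unfolding topo_order_def by auto
  have capacity: "\<forall>a \<in> set L. c a + net_inflow (tsrc txs) (tdst txs) E w a \<le> bal init txs (length txs) a"
    using G_net_inflow_le_bal[OF valid t0] L net unfolding c_def by simp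
  have oblig: "\<forall>a \<in> set L. c a \<le> c a + sum w {e \<in> E. tdst txs e = a \<and> tsrc txs e \<notin> set L}"
    using E(2) by (auto intro!: sum_nonneg)
  have "sum (snd (process (tsrc txs) (tdst txs) w E (bal init txs (length txs)) L c (\<lambda>_. 0))) (set L)
      = sum (\<lambda>_. 0) (set L) + sum c (set L)"
    by (rule sum_process[OF L(1) finE E(2) topo_order_edges_forward[OF topo] capacity oblig]) auto
  moreover have "tdst txs i0 \<in> set L" using L(2) unfolding G_vertices_def by simp
  then have "sum c (set L) = tval txs i0" unfolding c_def by (simp add: sum.delta)
  ultimately show ?thesis
    using L(2) unfolding calc_freeze_def c_def[symmetric] by simp
qed

end
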